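(* Let $\iota:B\to A$ be an injective homomorphism of groups. Then $q\mapsto\mathrm{Ker}(q)=\{a\in A:q(a)=1_B\}$ is a bijection from the set of maps $q:A\to B$ satisfying (ZL1), (ZL2), (ZL3) onto the set $\mathcal C_\iota$ of complements to $\iota(B)$ in $A$. The inverse sends a complement $X$ to the map $q_X$ with $q_X(\iota(b)x)=b$ for $b\in B$, $x\in X$.
   Context: For a homomorphism $\iota:B\to A$, conditions on $q:A\to B$: (ZL1) $q(1_A)=1_B$; (ZL2) $q(\iota(b)a)=b\,q(a)$ for all $a\in A,b\in B$; (ZL3) $q(aa')=q(a\,\iota(q(a')))$ for all $a,a'\in A$. These maps constitute $\mathcal Z^1(\mathsf T^l_\iota,(B,m_B))$, the algebra structures on the left $B$-set $B$ for the monad $A\otimes_B-$ induced by $\iota$. A complement to a subgroup $H$ of $A$ is a subgroup $X$ of $A$ with $HX=A$ and $H\cap X=\{1_A\}$ (so every $a\in A$ is uniquely $a=hx$ with $h\in H,x\in X$). *)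

theory Defs
  imports "HOL-Algebra.Algebra" "HOL-Library.FuncSet"
begin

text \<open>Maps are represented as functions on the carrier of A, extensional
  (undefined outside the carrier), so that equality of maps is equality as
  set-theoretic functions on carrier A.\<close>
definition ZL_maps :: "('b \<Rightarrow> 'a) \<Rightarrow> ('a, 'c) monoid_scheme \<Rightarrow> ('b, 'd) monoid_scheme \<Rightarrow> ('a \<Rightarrow> 'b) set" where
  "ZL_maps iota A B =
     {q \<in> extensional (carrier A) \<inter> (carrier A \<rightarrow> carrier B).
        q \<one>\<^bsub>A\<^esub> = \<one>\<^bsub>B\<^esub>
      \<and> (\<forall>a \<in> carrier A. \<forall>b \<in> carrier B. q (iota b \<otimes>\<^bsub>A\<^esub> a) = b \<otimes>\<^bsub>B\<^esub> q a)
      \<and> (\<forall>a \<in> carrier A. \<forall>a' \<in> carrier A.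
            q (a \<otimes>\<^bsub>A\<^esub> a') = q (a \<otimes>\<^bsub>A\<^esub> iota (q a')))}"

definition ZL_ker :: "('a, 'c) monoid_scheme \<Rightarrow> ('b, 'd) monoid_scheme \<Rightarrow> ('a \<Rightarrow> 'b) \<Rightarrow> 'a set" where
  "ZL_ker A B q = {a \<in> carrier A. q a = \<one>\<^bsub>B\<^esub>}"

definition complements :: "('a, 'c) monoid_scheme \<Rightarrow> 'a set \<Rightarrow> 'a set set" where
  "complements A H =
     {K. subgroup K A \<and> set_mult A H K = carrier A \<and> H \<inter> K = {one A}}"

end

theory Submission
  imports Defs
begin

text \<open>A map q satisfying (ZL1)-(ZL3) restricts to the inverse of \<iota> on \<iota>(B), and (ZL3)
  says exactly that q(a k) = q(a) for k in its kernel K. Hence K is a subgroup, every a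
  factors as \<iota>(q a) k with k \<in> K, and q is the projection of A = \<iota>(B) K onto B; so K is a
  complement of \<iota>(B) and it determines q. Conversely, the factorisation a = \<iota>(b) x along a
  complement X is unique (injectivity of \<iota>), and a \<mapsto> b satisfies (ZL1)-(ZL3) with
  kernel X.\<close>

lemma ZL_maps_closed: "q \<in> ZL_maps iota A B \<Longrightarrow> a \<in> carrier A \<Longrightarrow> q a \<in> carrier B"
  unfolding ZL_maps_def by auto

lemma ZL_maps_one: "q \<in> ZL_maps iota A B \<Longrightarrow> q \<one>\<^bsub>A\<^esub> = \<one>\<^bsub>B\<^esub>"
  unfolding ZL_maps_def by blast

lemma ZL_maps_left_mult:
  "q \<in> ZL_maps iota A B \<Longrightarrow> a \<in> carrier A \<Longrightarrow> b \<in> carrier B \<Longrightarrow>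
    q (iota b \<otimes>\<^bsub>A\<^esub> a) = b \<otimes>\<^bsub>B\<^esub> q a"
  unfolding ZL_maps_def by blast

lemma ZL_maps_right_mult:
  "q \<in> ZL_maps iota A B \<Longrightarrow> a \<in> carrier A \<Longrightarrow> a' \<in> carrier A \<Longrightarrow>
    q (a \<otimes>\<^bsub>A\<^esub> a') = q (a \<otimes>\<^bsub>A\<^esub> iota (q a'))"
  unfolding ZL_maps_def by blast

lemma ZL_mapsI:
  assumes "q \<in> extensional (carrier A)" and "\<And>a. a \<in> carrier A \<Longrightarrow> q a \<in> carrier B"
    and "q \<one>\<^bsub>A\<^esub> = \<one>\<^bsub>B\<^esub>"
    and "\<And>a b. a \<in> carrier A \<Longrightarrow> b \<in> carrier B \<Longrightarrow> q (iota b \<otimes>\<^bsub>A\<^esub> a) = b \<otimes>\<^bsub>B\<^esub> q a"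
    and "\<And>a a'. a \<in> carrier A \<Longrightarrow> a' \<in> carrier A \<Longrightarrow>
           q (a \<otimes>\<^bsub>A\<^esub> a') = q (a \<otimes>\<^bsub>A\<^esub> iota (q a'))"
  shows "q \<in> ZL_maps iota A B"
  using assms unfolding ZL_maps_def by blast

lemma (in group) complement_factor_exists:
  assumes "K \<in> complements G H" and "a \<in> carrier G"
  obtains x k where "x \<in> H" "k \<in> K" "a = x \<otimes> k"
  using assms unfolding complements_def set_mult_def by blast

lemma (in group) complement_factor_unique:
  assumes "subgroup H G" and "K \<in> complements G H"
    and "x \<in> H" "x' \<in> H" "k \<in> K" "k' \<in> K" and "x \<otimes> k = x' \<otimes> k'"
  shows "x = x'"
proof -
  have K: "subgroup K G" and trivial: "H \<inter> K = {\<one>}"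
    using assms(2) unfolding complements_def by auto
  have carr: "x \<in> carrier G" "x' \<in> carrier G" "k \<in> carrier G" "k' \<in> carrier G"
    using assms(3-6) subgroup.mem_carrier[OF assms(1)] subgroup.mem_carrier[OF K] by auto
  have "inv x' \<otimes> x = inv x' \<otimes> (x \<otimes> k) \<otimes> inv k"
    using carr by (simp add: m_assoc)
  also have "\<dots> = k' \<otimes> inv k"
    using assms(7) carr by (simp flip: m_assoc)
  finally have "inv x' \<otimes> x \<in> K"
    using K assms(5,6) by (simp add: subgroup.m_closed subgroup.m_inv_closed)
  moreover have "inv x' \<otimes> x \<in> H"
    using assms(1,3,4) by (simp add: subgroup.m_closed subgroup.m_inv_closed)
  ultimately have "inv x' \<otimes> x = \<one>"
    using trivial by blast
  then show ?thesis
    using carr inv_solve_left'[of \<one> x' x] by simp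
qed

context group_hom
begin

lemma ZL_maps_left_inverse: "q \<in> ZL_maps h H G \<Longrightarrow> g \<in> carrier G \<Longrightarrow> q (h g) = g"
  using ZL_maps_left_mult[of q h H G "\<one>\<^bsub>H\<^esub>" g] by (simp add: ZL_maps_one)

lemma ZL_maps_mult_ker:
  assumes "q \<in> ZL_maps h H G" and "a \<in> carrier H" and "k \<in> ZL_ker H G q"
  shows "q (a \<otimes>\<^bsub>H\<^esub> k) = q a"
  using assms ZL_maps_right_mult[of q h H G a k] unfolding ZL_ker_def by simp

lemma subgroup_ZL_ker:
  assumes q: "q \<in> ZL_maps h H G"
  shows "subgroup (ZL_ker H G q) H"
proof (rule H.subgroupI)
  show "ZL_ker H G q \<subseteq> carrier H" and "ZL_ker H G q \<noteq> {}"
    using ZL_maps_one[OF q] unfolding ZL_ker_def by auto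
next
  fix k assume k: "k \<in> ZL_ker H G q"
  then have "k \<in> carrier H" unfolding ZL_ker_def by simp
  then have "q (inv\<^bsub>H\<^esub> k) = q (inv\<^bsub>H\<^esub> k \<otimes>\<^bsub>H\<^esub> k)"
    by (simp only: ZL_maps_mult_ker[OF q _ k] H.inv_closed)
  also have "\<dots> = \<one>"
    using \<open>k \<in> carrier H\<close> ZL_maps_one[OF q] by simp
  finally show "inv\<^bsub>H\<^esub> k \<in> ZL_ker H G q"
    using \<open>k \<in> carrier H\<close> unfolding ZL_ker_def by simp
next
  fix k k' assume "k \<in> ZL_ker H G q" and "k' \<in> ZL_ker H G q"
  then show "k \<otimes>\<^bsub>H\<^esub> k' \<in> ZL_ker H G q"
    using ZL_maps_mult_ker[OF q] unfolding ZL_ker_def by simp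
qed

lemma ZL_maps_factor:
  assumes q: "q \<in> ZL_maps h H G" and a: "a \<in> carrier H"
  obtains k where "k \<in> ZL_ker H G q" and "a = h (q a) \<otimes>\<^bsub>H\<^esub> k"
proof
  have qa: "q a \<in> carrier G" using ZL_maps_closed[OF q a] .
  show "a = h (q a) \<otimes>\<^bsub>H\<^esub> (h (inv (q a)) \<otimes>\<^bsub>H\<^esub> a)"
    using qa a by (simp add: H.m_assoc [symmetric])
  show "h (inv (q a)) \<otimes>\<^bsub>H\<^esub> a \<in> ZL_ker H G q"
    using qa a ZL_maps_left_mult[OF q a, of "inv (q a)"] unfolding ZL_ker_def by simp
qed

lemma ZL_ker_in_complements:
  assumes q: "q \<in> ZL_maps h H G"
  shows "ZL_ker H G q \<in> complements H (h ` carrier G)"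
  unfolding complements_def
proof (intro CollectI conjI)
  show "subgroup (ZL_ker H G q) H" using subgroup_ZL_ker[OF q] .
  show "h ` carrier G <#>\<^bsub>H\<^esub> ZL_ker H G q = carrier H"
  proof
    show "h ` carrier G <#>\<^bsub>H\<^esub> ZL_ker H G q \<subseteq> carrier H"
      unfolding set_mult_def ZL_ker_def by auto
    show "carrier H \<subseteq> h ` carrier G <#>\<^bsub>H\<^esub> ZL_ker H G q"
    proof
      fix a assume a: "a \<in> carrier H"
      then obtain k where "k \<in> ZL_ker H G q" and "a = h (q a) \<otimes>\<^bsub>H\<^esub> k"
        using ZL_maps_factor[OF q] by blast
      with ZL_maps_closed[OF q a] show "a \<in> h ` carrier G <#>\<^bsub>H\<^esub> ZL_ker H G q"
        unfolding set_mult_def by blast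
    qed
  qed
  show "h ` carrier G \<inter> ZL_ker H G q = {\<one>\<^bsub>H\<^esub>}"
  proof (intro equalityI subsetI)
    fix x assume "x \<in> h ` carrier G \<inter> ZL_ker H G q"
    then obtain g where "g \<in> carrier G" and "x = h g" and "h g \<in> ZL_ker H G q"
      by auto
    then show "x \<in> {\<one>\<^bsub>H\<^esub>}"
      using ZL_maps_left_inverse[OF q] unfolding ZL_ker_def by simp
  next
    have "\<one>\<^bsub>H\<^esub> \<in> h ` carrier G"
      using hom_one G.one_closed by (rule image_eqI [of _ h, OF sym])
    moreover have "\<one>\<^bsub>H\<^esub> \<in> ZL_ker H G q"
      using ZL_maps_one[OF q] unfolding ZL_ker_def by simp
    ultimately show "x \<in> h ` carrier G \<inter> ZL_ker H G q" if "x \<in> {\<one>\<^bsub>H\<^esub>}" for x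
      using that by simp
  qed
qed

lemma inj_on_ZL_ker: "inj_on (ZL_ker H G) (ZL_maps h H G)"
proof
  fix q q' assume q: "q \<in> ZL_maps h H G" and q': "q' \<in> ZL_maps h H G"
    and ker: "ZL_ker H G q = ZL_ker H G q'"
  show "q = q'"
  proof (rule extensionalityI)
    show "q \<in> extensional (carrier H)" and "q' \<in> extensional (carrier H)"
      using q q' unfolding ZL_maps_def by auto
  next
    fix a assume a: "a \<in> carrier H"
    then obtain k where k: "k \<in> ZL_ker H G q" and a_eq: "a = h (q a) \<otimes>\<^bsub>H\<^esub> k"
      using ZL_maps_factor[OF q] by blast
    have "q' a = q a \<otimes> q' k"
      using ZL_maps_left_mult[OF q', of k "q a"] a_eq k ZL_maps_closed[OF q a]
      unfolding ZL_ker_def by simp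
    then show "q a = q' a"
      using k ker ZL_maps_closed[OF q a] unfolding ZL_ker_def by simp
  qed
qed

end

locale group_embedding = group_hom +
  assumes inj_hom: "inj_on h (carrier G)"
begin

definition complement_proj where
  "complement_proj K a =
     (if a \<in> carrier H then THE g. g \<in> carrier G \<and> (\<exists>k \<in> K. a = h g \<otimes>\<^bsub>H\<^esub> k) else undefined)"

lemma complement_factor_hom:
  assumes "K \<in> complements H (h ` carrier G)" and "a \<in> carrier H"
  obtains g k where "g \<in> carrier G" "k \<in> K" "a = h g \<otimes>\<^bsub>H\<^esub> k"
  using H.complement_factor_exists[OF assms] by blast

lemma complement_proj_eq:
  assumes K: "K \<in> complements H (h ` carrier G)" and g: "g \<in> carrier G" and k: "k \<in> K"
  shows "complement_proj K (h g \<otimes>\<^bsub>H\<^esub> k) = g"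
proof -
  have "k \<in> carrier H"
    using K k unfolding complements_def by (auto dest: subgroup.mem_carrier)
  moreover have "(THE g'. g' \<in> carrier G \<and> (\<exists>k' \<in> K. h g \<otimes>\<^bsub>H\<^esub> k = h g' \<otimes>\<^bsub>H\<^esub> k')) = g"
  proof (rule the_equality)
    fix g' assume "g' \<in> carrier G \<and> (\<exists>k' \<in> K. h g \<otimes>\<^bsub>H\<^esub> k = h g' \<otimes>\<^bsub>H\<^esub> k')"
    then have "h g = h g'" and "g' \<in> carrier G"
      using H.complement_factor_unique[OF img_is_subgroup K] g k by blast+
    then show "g' = g"
      using inj_hom g by (auto dest: inj_onD)
  qed (use g k in auto)
  ultimately show ?thesis
    using g unfolding complement_proj_def by simp
qed

lemma complement_proj_mult_right:
  assumes K: "K \<in> complements H (h ` carrier G)" and a: "a \<in> carrier H" and k: "k \<in> K"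
  shows "complement_proj K (a \<otimes>\<^bsub>H\<^esub> k) = complement_proj K a"
proof -
  have sub: "subgroup K H" using K unfolding complements_def by simp
  obtain g k' where g: "g \<in> carrier G" and k': "k' \<in> K" and a_eq: "a = h g \<otimes>\<^bsub>H\<^esub> k'"
    using complement_factor_hom[OF K a] .
  have "a \<otimes>\<^bsub>H\<^esub> k = h g \<otimes>\<^bsub>H\<^esub> (k' \<otimes>\<^bsub>H\<^esub> k)"
    using a_eq g k k' sub by (simp add: H.m_assoc subgroup.mem_carrier)
  then show ?thesis
    using complement_proj_eq[OF K] a_eq g k k' subgroup.m_closed[OF sub] by simp
qed

lemma complement_proj_in_ZL_maps:
  assumes K: "K \<in> complements H (h ` carrier G)"
  shows "complement_proj K \<in> ZL_maps h H G"
proof (rule ZL_mapsI)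
  have sub: "subgroup K H" using K unfolding complements_def by simp
  show "complement_proj K \<in> extensional (carrier H)"
    unfolding complement_proj_def extensional_def by simp
  show "complement_proj K a \<in> carrier G" if "a \<in> carrier H" for a
    using complement_factor_hom[OF K that] complement_proj_eq[OF K] by metis
  show "complement_proj K \<one>\<^bsub>H\<^esub> = \<one>"
    using complement_proj_eq[OF K G.one_closed subgroup.one_closed[OF sub]] by simp
  show "complement_proj K (h g \<otimes>\<^bsub>H\<^esub> a) = g \<otimes> complement_proj K a"
    if g: "g \<in> carrier G" and a: "a \<in> carrier H" for a g
  proof -
    obtain g' k where g': "g' \<in> carrier G" and k: "k \<in> K" and a_eq: "a = h g' \<otimes>\<^bsub>H\<^esub> k"
      using complement_factor_hom[OF K a] .
    have "h g \<otimes>\<^bsub>H\<^esub> a = h (g \<otimes> g') \<otimes>\<^bsub>H\<^esub> k"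
      using a_eq g g' k sub by (simp add: H.m_assoc subgroup.mem_carrier)
    then show ?thesis
      using complement_proj_eq[OF K G.m_closed[OF g g'] k] complement_proj_eq[OF K g' k]
        a_eq g g' k by simp
  qed
  show "complement_proj K (a \<otimes>\<^bsub>H\<^esub> a') = complement_proj K (a \<otimes>\<^bsub>H\<^esub> h (complement_proj K a'))"
    if a: "a \<in> carrier H" and a': "a' \<in> carrier H" for a a'
  proof -
    obtain g k where g: "g \<in> carrier G" and k: "k \<in> K" and a'_eq: "a' = h g \<otimes>\<^bsub>H\<^esub> k"
      using complement_factor_hom[OF K a'] .
    have "a \<otimes>\<^bsub>H\<^esub> a' = (a \<otimes>\<^bsub>H\<^esub> h g) \<otimes>\<^bsub>H\<^esub> k"
      using a'_eq a g k sub by (simp add: H.m_assoc subgroup.mem_carrier)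
    then show ?thesis
      using complement_proj_mult_right[OF K _ k] complement_proj_eq[OF K g k] a a'_eq g
      by simp
  qed
qed

lemma ZL_ker_complement_proj:
  assumes K: "K \<in> complements H (h ` carrier G)"
  shows "ZL_ker H G (complement_proj K) = K"
proof
  have sub: "subgroup K H" using K unfolding complements_def by simp
  show "K \<subseteq> ZL_ker H G (complement_proj K)"
    using complement_proj_eq[OF K G.one_closed] sub
    unfolding ZL_ker_def by (auto simp: subgroup.mem_carrier)
  show "ZL_ker H G (complement_proj K) \<subseteq> K"
  proof
    fix a assume "a \<in> ZL_ker H G (complement_proj K)"
    then have a: "a \<in> carrier H" and ker: "complement_proj K a = \<one>"
      unfolding ZL_ker_def by auto
    obtain g k where g: "g \<in> carrier G" and k: "k \<in> K" and a_eq: "a = h g \<otimes>\<^bsub>H\<^esub> k"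
      using complement_factor_hom[OF K a] .
    then have "g = \<one>" using complement_proj_eq[OF K g k] ker by simp
    then show "a \<in> K" using a_eq k sub by (simp add: subgroup.mem_carrier)
  qed
qed

lemma ZL_ker_image: "ZL_ker H G ` ZL_maps h H G = complements H (h ` carrier G)"
proof (rule subset_antisym)
  show "ZL_ker H G ` ZL_maps h H G \<subseteq> complements H (h ` carrier G)"
    using ZL_ker_in_complements by blast
  show "complements H (h ` carrier G) \<subseteq> ZL_ker H G ` ZL_maps h H G"
  proof
    fix K assume K: "K \<in> complements H (h ` carrier G)"
    show "K \<in> ZL_ker H G ` ZL_maps h H G"
      using ZL_ker_complement_proj[OF K, symmetric] complement_proj_in_ZL_maps[OF K]
      by (rule image_eqI)
  qed
qed

lemma bij_betw_ZL_ker: "bij_betw (ZL_ker H G) (ZL_maps h H G) (complements H (h ` carrier G))"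
  unfolding bij_betw_def using inj_on_ZL_ker ZL_ker_image by blast

lemma the_inv_into_ZL_ker:
  assumes "K \<in> complements H (h ` carrier G)"
  shows "the_inv_into (ZL_maps h H G) (ZL_ker H G) K = complement_proj K"
  using the_inv_into_f_eq[OF inj_on_ZL_ker] ZL_ker_complement_proj[OF assms]
    complement_proj_in_ZL_maps[OF assms] by blast

end

theorem proposition4p3:
  fixes A :: "('a, 'c) monoid_scheme" and B :: "('b, 'd) monoid_scheme"
    and iota :: "'b \<Rightarrow> 'a"
  assumes "group A" and "group B"
    and "iota \<in> hom B A" and "inj_on iota (carrier B)"
  shows "bij_betw (ZL_ker A B) (ZL_maps iota A B) (complements A (iota ` carrier B))
    \<and> (\<forall>K \<in> complements A (iota ` carrier B).
         \<forall>b \<in> carrier B. \<forall>x \<in> K.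
           the_inv_into (ZL_maps iota A B) (ZL_ker A B) K (iota b \<otimes>\<^bsub>A\<^esub> x) = b)"
proof -
  interpret group_embedding B A iota
    using assms by (simp add: group_embedding_def group_embedding_axioms_def
        group_hom_def group_hom_axioms_def)
  show ?thesis
  proof (intro conjI ballI)
    show "bij_betw (ZL_ker A B) (ZL_maps iota A B) (complements A (iota ` carrier B))"
      by (rule bij_betw_ZL_ker)
  next
    fix K b x
    assume K: "K \<in> complements A (iota ` carrier B)" and "b \<in> carrier B" and "x \<in> K"
    then show "the_inv_into (ZL_maps iota A B) (ZL_ker A B) K (iota b \<otimes>\<^bsub>A\<^esub> x) = b"
      using the_inv_into_ZL_ker[OF K] complement_proj_eq[OF K] by simp
  qed
qed

end
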